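(* Let $\Gamma:\Delta\to\mathbb{R}_+$ with $\Gamma(s,s)>0$ for all $s\ge0$, and let $\rho$ be a Borel measure on $\mathbb{R}_+$ finite on compact sets. Then $\Gamma$ preserves nonnegativity if and only if $\Gamma^\rho(t,s)=\Gamma(t,s)e^{-\rho((s,t])}$ preserves nonnegativity.
   Context: $\Delta=\{(t,s):0\le s\le t\}$. A kernel $\Gamma:\Delta\to\mathbb{R}_+$ preserves nonnegativity if for every $T>0$, $K\in\mathbb{N}^*$, $x_1,\dots,x_K\in\mathbb{R}$ and $0\le t_1<\dots<t_K<T$ with $\sum_{k'=1}^kx_{k'}\Gamma(t_k,t_{k'})\ge0$ for all $k$, one has $\sum_{k:t_k\le t}x_k\Gamma(t,t_k)\ge0$ for all $t\in[0,T]$. *)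

theory Defs
  imports "HOL-Analysis.Analysis"
begin

text \<open>A kernel on Delta = {(t,s). 0 <= s <= t} is represented as a function
  real => real => real (first argument t, second s); values outside Delta are irrelevant.
  Points t_1 < ... < t_K are indexed by 0..<K.\<close>

definition preserves_nonneg :: "(real \<Rightarrow> real \<Rightarrow> real) \<Rightarrow> bool" where
  "preserves_nonneg \<Gamma> \<longleftrightarrow>
     (\<forall>T>0. \<forall>K::nat. K \<ge> 1 \<longrightarrow> (\<forall>(x::nat \<Rightarrow> real) (tt::nat \<Rightarrow> real).
        (0 \<le> tt 0 \<and> (\<forall>k. Suc k < K \<longrightarrow> tt k < tt (Suc k)) \<and> tt (K - 1) < T \<and>
         (\<forall>k<K. (\<Sum>k'\<in>{..k}. x k' * \<Gamma> (tt k) (tt k')) \<ge> 0))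
        \<longrightarrow> (\<forall>t\<in>{0..T}. (\<Sum>k\<in>{k. k < K \<and> tt k \<le> t}. x k * \<Gamma> t (tt k)) \<ge> 0)))"

definition kernel_rho :: "(real \<Rightarrow> real \<Rightarrow> real) \<Rightarrow> real measure \<Rightarrow> real \<Rightarrow> real \<Rightarrow> real" where
  "kernel_rho \<Gamma> \<rho> t s = \<Gamma> t s * exp (- measure \<rho> {s<..t})"

end

theory Submission
  imports Defs
begin

text \<open>With \<open>F u = \<rho>([0,u])\<close> one has \<open>exp (-\<rho>((s,t])) = exp (- F t) * exp (F s)\<close>, so
  \<open>\<Gamma>\<^sup>\<rho>\<close> is \<open>\<Gamma>\<close> multiplied by a positive function of \<open>t\<close> and a positive function of \<open>s\<close>.
  Such a rescaling preserves the property: replacing the coefficients \<open>x\<^sub>k\<close> by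
  \<open>x\<^sub>k b(t\<^sub>k)\<close> multiplies every sum in the definition by the positive factor \<open>a(t)\<close>.\<close>

lemma increasing_points_mono:
  fixes tt :: "nat \<Rightarrow> real"
  assumes inc: "\<forall>k. Suc k < K \<longrightarrow> tt k < tt (Suc k)" and "i \<le> j" "j < K"
  shows "tt i \<le> tt j"
  using assms(2,3)
proof (induction j)
  case (Suc j)
  show ?case
  proof (cases "i = Suc j")
    case False
    with Suc have "tt i \<le> tt j" by simp
    also have "tt j < tt (Suc j)" using inc Suc.prems by blast
    finally show ?thesis by simp
  qed simp
qed simp

lemma sum_rescaled_kernel:
  fixes G \<Gamma> :: "real \<Rightarrow> real \<Rightarrow> real"
  assumes eq: "\<And>t s. 0 \<le> s \<Longrightarrow> s \<le> t \<Longrightarrow> G t s = a t * \<Gamma> t s * b s"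
    and A: "\<And>k. k \<in> A \<Longrightarrow> 0 \<le> tt k \<and> tt k \<le> t"
  shows "(\<Sum>k\<in>A. x k * G t (tt k)) = a t * (\<Sum>k\<in>A. (x k * b (tt k)) * \<Gamma> t (tt k))"
  unfolding sum_distrib_left by (rule sum.cong) (use eq A in auto)

lemma preserves_nonneg_rescale:
  fixes G \<Gamma> :: "real \<Rightarrow> real \<Rightarrow> real" and a b :: "real \<Rightarrow> real"
  assumes eq: "\<And>t s. 0 \<le> s \<Longrightarrow> s \<le> t \<Longrightarrow> G t s = a t * \<Gamma> t s * b s"
    and a_pos: "\<And>t. a t > 0"
    and pn: "preserves_nonneg \<Gamma>"
  shows "preserves_nonneg G"
  unfolding preserves_nonneg_def
proof (intro allI impI ballI)
  fix T :: real and K :: nat and x tt :: "nat \<Rightarrow> real" and t :: real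
  assume T: "T > 0" and K: "K \<ge> 1"
    and H: "0 \<le> tt 0 \<and> (\<forall>k. Suc k < K \<longrightarrow> tt k < tt (Suc k)) \<and> tt (K - 1) < T \<and>
         (\<forall>k<K. (\<Sum>k'\<in>{..k}. x k' * G (tt k) (tt k')) \<ge> 0)"
    and t: "t \<in> {0..T}"
  have inc: "\<forall>k. Suc k < K \<longrightarrow> tt k < tt (Suc k)" using H by blast
  have tt_nonneg: "0 \<le> tt k" if "k < K" for k
    using increasing_points_mono[OF inc, of 0 k] that H by simp
  define y where "y k = x k * b (tt k)" for k
  have "(\<Sum>k'\<in>{..k}. y k' * \<Gamma> (tt k) (tt k')) \<ge> 0" if k: "k < K" for k
  proof -
    have "(\<Sum>k'\<in>{..k}. x k' * G (tt k) (tt k')) = a (tt k) * (\<Sum>k'\<in>{..k}. y k' * \<Gamma> (tt k) (tt k'))"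
      unfolding y_def
      by (rule sum_rescaled_kernel[OF eq])
        (use k tt_nonneg increasing_points_mono[OF inc] in auto)
    moreover have "(\<Sum>k'\<in>{..k}. x k' * G (tt k) (tt k')) \<ge> 0" using H k by blast
    ultimately show ?thesis using a_pos[of "tt k"] by (simp add: zero_le_mult_iff)
  qed
  then have "(\<Sum>k\<in>{k. k < K \<and> tt k \<le> t}. y k * \<Gamma> t (tt k)) \<ge> 0"
    using pn T K H t unfolding preserves_nonneg_def by blast
  moreover have "(\<Sum>k\<in>{k. k < K \<and> tt k \<le> t}. x k * G t (tt k))
      = a t * (\<Sum>k\<in>{k. k < K \<and> tt k \<le> t}. y k * \<Gamma> t (tt k))"
    unfolding y_def by (rule sum_rescaled_kernel[OF eq]) (use tt_nonneg in auto)
  ultimately show "(\<Sum>k\<in>{k. k < K \<and> tt k \<le> t}. x k * G t (tt k)) \<ge> 0"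
    using a_pos[of t] by simp
qed

lemma preserves_nonneg_rescale_iff:
  fixes G \<Gamma> :: "real \<Rightarrow> real \<Rightarrow> real" and a b :: "real \<Rightarrow> real"
  assumes eq: "\<And>t s. 0 \<le> s \<Longrightarrow> s \<le> t \<Longrightarrow> G t s = a t * \<Gamma> t s * b s"
    and a_pos: "\<And>t. a t > 0" and b_pos: "\<And>s. b s > 0"
  shows "preserves_nonneg G \<longleftrightarrow> preserves_nonneg \<Gamma>"
proof
  show "preserves_nonneg \<Gamma> \<Longrightarrow> preserves_nonneg G"
    by (rule preserves_nonneg_rescale[OF eq a_pos])
  have eq': "\<Gamma> t s = inverse (a t) * G t s * inverse (b s)" if "0 \<le> s" "s \<le> t" for t s
    using eq[OF that] a_pos[of t] b_pos[of s] by simp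
  have inverse_a_pos: "inverse (a t) > 0" for t
    using a_pos[of t] by simp
  show "preserves_nonneg G \<Longrightarrow> preserves_nonneg \<Gamma>"
    by (rule preserves_nonneg_rescale[OF eq' inverse_a_pos])
qed

lemma measure_greaterThanAtMost_eq_diff:
  fixes \<rho> :: "real measure"
  assumes "sets \<rho> = sets borel" and "emeasure \<rho> {a..t} \<noteq> \<infinity>" and "a \<le> s" "s \<le> t"
  shows "measure \<rho> {s<..t} = measure \<rho> {a..t} - measure \<rho> {a..s}"
proof -
  have "{s<..t} = {a..t} - {a..s}" using assms(3,4) by auto
  then show ?thesis
    using measure_Diff[of \<rho> "{a..t}" "{a..s}"] assms by auto
qed

theorem mainTheorem17:
  fixes \<Gamma> :: "real \<Rightarrow> real \<Rightarrow> real" and \<rho> :: "real measure"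
  assumes nonneg: "\<And>t s. 0 \<le> s \<Longrightarrow> s \<le> t \<Longrightarrow> \<Gamma> t s \<ge> 0"
    and diag: "\<And>s. 0 \<le> s \<Longrightarrow> \<Gamma> s s > 0"
    and borel: "sets \<rho> = sets (borel :: real measure)"
    and loc_fin: "\<And>K. compact K \<Longrightarrow> K \<subseteq> {0..} \<Longrightarrow> emeasure \<rho> K < \<infinity>"
  shows "preserves_nonneg \<Gamma> \<longleftrightarrow> preserves_nonneg (kernel_rho \<Gamma> \<rho>)"
proof -
  define F where "F u = measure \<rho> {0..u}" for u
  have "kernel_rho \<Gamma> \<rho> t s = exp (- F t) * \<Gamma> t s * exp (F s)" if "0 \<le> s" "s \<le> t" for t s
  proof -
    have "measure \<rho> {s<..t} = F t - F s"
      unfolding F_def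
      by (rule measure_greaterThanAtMost_eq_diff) (use borel loc_fin[of "{0..t}"] that in auto)
    then have "exp (- measure \<rho> {s<..t}) = exp (- F t) * exp (F s)"
      by (simp add: exp_add[symmetric])
    then show ?thesis
      unfolding kernel_rho_def by simp
  qed
  then show ?thesis
    using preserves_nonneg_rescale_iff[of "kernel_rho \<Gamma> \<rho>" "\<lambda>t. exp (- F t)" \<Gamma> "\<lambda>s. exp (F s)"]
    by simp
qed

end
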